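(* Let $P$ be an orthogonal polygon, let $p$ be a point in the interior of a pixel $\psi$ of $P$, and let $p'$ be any point of $\psi$ (possibly on the boundary of $\psi$). Then $G(p)\subseteq G(p')$. This holds under either of the two conventions (i), (ii) for $r$-guarding.
   Context: An orthogonal polygon $P$ is a closed connected region of the plane whose boundary consists of finitely many axis-parallel segments; it may have holes. The pixelation of $P$ is the partition of $P$ into rectangles obtained by shooting, from every reflex vertex of $P$, a horizontal and a vertical ray into the interior of $P$ until it hits the boundary of $P$; the resulting rectangles are called pixels. For points $g,p$, let $R(g,p)$ be the smallest closed axis-aligned rectangle containing $g$ and $p$. An axis-aligned rectangle $R\subseteq P$ is degenerate if it has area $0$ and there is no axis-aligned rectangle $R'$ of positive area with $R\subset R'\subseteq P$. Two conventions for $r$-guarding are considered: (i) $g$ $r$-guards $p$ iff $R(g,p)\subseteq P$; (ii) $g$ $r$-guards $p$ iff $R(g,p)\subseteq P$ and $R(g,p)$ is not degenerate. The guarding set $G(p)$ of a point $p\in P$ is the set of all points $g\in P$ that $r$-guard $p$. *)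

theory Defs
  imports "HOL-Analysis.Analysis"
begin

type_synonym pt = "real \<times> real"

definition axis_segment :: "pt set \<Rightarrow> bool" where
  "axis_segment s \<longleftrightarrow> (\<exists>a b. (fst a = fst b \<or> snd a = snd b) \<and> s = closed_segment a b)"

text \<open>Orthogonal polygon (possibly with holes): a compact connected region
 (closure of its connected interior) whose boundary is a finite union of
 axis-parallel segments.\<close>
definition orthogonal_polygon :: "pt set \<Rightarrow> bool" where
  "orthogonal_polygon P \<longleftrightarrow>
     compact P \<and> connected P \<and> P \<noteq> {} \<and> connected (interior P) \<and>
     closure (interior P) = P \<and>
     (\<exists>S. finite S \<and> (\<forall>s\<in>S. axis_segment s) \<and> frontier P = \<Union>S)"

text \<open>Reflex vertex: locally P is the complement of exactly one open quadrant at v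
 (interior angle 270 degrees).\<close>
definition reflex_vertex :: "pt set \<Rightarrow> pt \<Rightarrow> bool" where
  "reflex_vertex P v \<longleftrightarrow> v \<in> P \<and>
     (\<exists>e>0. \<exists>sx sy::real. sx \<in> {-1, 1} \<and> sy \<in> {-1, 1} \<and>
        (\<forall>q. dist q v < e \<longrightarrow>
           (q \<in> P \<longleftrightarrow> \<not> (sx * (fst q - fst v) > 0 \<and> sy * (snd q - snd v) > 0))))"

definition axis_dirs :: "pt set" where
  "axis_dirs = {(1,0), (-1,0), (0,1), (0,-1)}"

text \<open>The ray shot from v in direction d into the interior of P, up to (and including)
 the first point where it hits the boundary. If v + s d is not in the interior for small
 s > 0 (i.e. d points along a boundary edge), this is just {v}.\<close>
definition ray :: "pt set \<Rightarrow> pt \<Rightarrow> pt \<Rightarrow> pt set" where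
  "ray P v d = {v + t *\<^sub>R d | t. t \<ge> 0 \<and> (\<forall>s. 0 < s \<and> s < t \<longrightarrow> v + s *\<^sub>R d \<in> interior P)}"

definition cuts :: "pt set \<Rightarrow> pt set" where
  "cuts P = \<Union>{ray P v d | v d. reflex_vertex P v \<and> d \<in> axis_dirs}"

definition pixels :: "pt set \<Rightarrow> pt set set" where
  "pixels P = closure ` components (interior P - cuts P)"

definition rect :: "pt \<Rightarrow> pt \<Rightarrow> pt set" where
  "rect g p = {q. min (fst g) (fst p) \<le> fst q \<and> fst q \<le> max (fst g) (fst p) \<and>
                  min (snd g) (snd p) \<le> snd q \<and> snd q \<le> max (snd g) (snd p)}"

definition axis_rect :: "pt set \<Rightarrow> bool" where
  "axis_rect R \<longleftrightarrow> (\<exists>a1 b1 a2 b2. a1 \<le> b1 \<and> a2 \<le> b2 \<and>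
      R = {q. a1 \<le> fst q \<and> fst q \<le> b1 \<and> a2 \<le> snd q \<and> snd q \<le> b2})"

definition pos_area_rect :: "pt set \<Rightarrow> bool" where
  "pos_area_rect R \<longleftrightarrow> (\<exists>a1 b1 a2 b2. a1 < b1 \<and> a2 < b2 \<and>
      R = {q. a1 \<le> fst q \<and> fst q \<le> b1 \<and> a2 \<le> snd q \<and> snd q \<le> b2})"

definition degenerate :: "pt set \<Rightarrow> pt set \<Rightarrow> bool" where
  "degenerate P R \<longleftrightarrow> axis_rect R \<and> R \<subseteq> P \<and> \<not> pos_area_rect R \<and>
     \<not> (\<exists>R'. pos_area_rect R' \<and> R \<subset> R' \<and> R' \<subseteq> P)"

text \<open>Convention: ndeg = False is convention (i), ndeg = True is convention (ii).\<close>
definition rguards :: "bool \<Rightarrow> pt set \<Rightarrow> pt \<Rightarrow> pt \<Rightarrow> bool" where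
  "rguards ndeg P g p \<longleftrightarrow> rect g p \<subseteq> P \<and> (ndeg \<longrightarrow> \<not> degenerate P (rect g p))"

definition guarding_set :: "bool \<Rightarrow> pt set \<Rightarrow> pt \<Rightarrow> pt set" where
  "guarding_set ndeg P p = {g \<in> P. rguards ndeg P g p}"

end

theory Submission
  imports Defs
begin

text \<open>Fix a guard g and let G be the set of points y with R(g,y) \<subseteq> P. Since P is closed, so is G.
Away from the cuts G is also open: if R(g,x) \<subseteq> P, the two sides of R(g,x) through x can be
thickened to thin strips inside P, for otherwise such a side would run into the boundary at a
reflex vertex whose ray passes through x. A component of the interior minus the cuts is connected,
so it lies in G or misses it, and by closedness the same holds for its closure, the pixel.
A point p of the interior of a pixel is not on a cut: next to a point of a ray shot from a reflex
vertex v, a guard placed just beyond v sees precisely the points on one side of the ray, which would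
split G within the pixel. Finally, if R(g,p') has area zero, a point c of the pixel near p in general
position with respect to g spans with g and p' a positive-area rectangle covered by
R(g,c) \<union> R(c,p'), so R(g,p') is not degenerate.

Horizontal and vertical situations are exchanged by the reflection in the diagonal, prod.swap,
which preserves all notions involved; the arguments are carried out for one direction only.\<close>

lemma abs_fst_diff_le_dist: "\<bar>fst q - fst v\<bar> \<le> dist q (v::pt)"
  using dist_fst_le[of q v] by (simp add: dist_real_def)

lemma abs_snd_diff_le_dist: "\<bar>snd q - snd v\<bar> \<le> dist q (v::pt)"
  using dist_snd_le[of q v] by (simp add: dist_real_def)

lemma dist_le_abs_fst_plus_abs_snd: "dist q (v::pt) \<le> \<bar>fst q - fst v\<bar> + \<bar>snd q - snd v\<bar>"
  unfolding dist_prod_def dist_real_def using sqrt_sum_squares_le_sum_abs by simp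

lemma orthogonal_polygon_closed: "orthogonal_polygon P \<Longrightarrow> closed P"
  unfolding orthogonal_polygon_def using compact_imp_closed by blast

lemma orthogonal_polygon_closure_interior: "orthogonal_polygon P \<Longrightarrow> closure (interior P) = P"
  unfolding orthogonal_polygon_def by blast

lemma axis_segment_coordinate:
  assumes "axis_segment s" "v \<in> s" "z \<in> s"
  shows "fst z = fst v \<or> snd z = snd v"
proof -
  obtain a b where ab: "fst a = fst b \<or> snd a = snd b" "s = closed_segment a b"
    using assms(1) unfolding axis_segment_def by blast
  have "(fst a = fst b \<longrightarrow> fst w = fst a) \<and> (snd a = snd b \<longrightarrow> snd w = snd a)"
    if w: "w \<in> closed_segment a b" for w
  proof -
    obtain u where "w = (1 - u) *\<^sub>R a + u *\<^sub>R b"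
      using w unfolding in_segment by blast
    then have "fst w = (1 - u) * fst a + u * fst b" "snd w = (1 - u) * snd a + u * snd b"
      by simp_all
    then show ?thesis by (auto simp: algebra_simps)
  qed
  then show ?thesis using ab assms(2,3) by metis
qed

lemma frontier_locally_on_axes:
  assumes "orthogonal_polygon P"
  obtains \<delta> where "\<delta> > 0" "\<And>z. z \<in> frontier P \<Longrightarrow> dist z v < \<delta> \<Longrightarrow> fst z = fst v \<or> snd z = snd v"
proof -
  obtain S where S: "finite S" "\<forall>s\<in>S. axis_segment s" "frontier P = \<Union>S"
    using assms unfolding orthogonal_polygon_def by blast
  let ?U = "\<Union>{s\<in>S. v \<notin> s}"
  have "closed ?U"
    using S(1,2) by (intro closed_Union) (auto simp: axis_segment_def)
  moreover have "v \<notin> ?U" by blast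
  ultimately obtain \<delta> where "\<delta> > 0" "ball v \<delta> \<subseteq> - ?U"
    using open_contains_ball_eq[of "- ?U" v] by auto
  moreover have "fst z = fst v \<or> snd z = snd v" if "z \<in> frontier P" "z \<notin> ?U" for z
    using that S axis_segment_coordinate by blast
  ultimately show thesis
    using that by (force simp: dist_commute)
qed


section \<open>Reflection in the diagonal\<close>

lemma mem_swap_image_iff: "q \<in> prod.swap ` S \<longleftrightarrow> prod.swap q \<in> S"
  by (metis image_iff swap_swap)

lemma swap_image_swap_image [simp]: "prod.swap ` prod.swap ` S = S"
  by (simp add: image_image)

lemma linear_swap: "linear (prod.swap :: pt \<Rightarrow> pt)"
  by (rule linearI) auto

lemma dist_swap: "dist (prod.swap a) (prod.swap b) = dist a (b::pt)"
  by (simp add: dist_prod_def add.commute)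

lemma interior_swap: "interior (prod.swap ` S) = prod.swap ` interior (S::pt set)"
  by (simp add: interior_injective_linear_image linear_swap)

lemma closure_swap: "closure (prod.swap ` S) = prod.swap ` closure (S::pt set)"
  by (simp add: closure_injective_linear_image linear_swap)

lemma frontier_swap: "frontier (prod.swap ` S) = prod.swap ` frontier (S::pt set)"
  by (simp add: frontier_def interior_swap closure_swap image_set_diff)

lemma axis_segment_swap:
  assumes "axis_segment s"
  shows "axis_segment (prod.swap ` s)"
proof -
  obtain a b where "fst a = fst b \<or> snd a = snd b" "s = closed_segment a b"
    using assms unfolding axis_segment_def by blast
  then show ?thesis
    unfolding axis_segment_def
    by (intro exI[of _ "prod.swap a"] exI[of _ "prod.swap b"])
       (auto simp: closed_segment_linear_image[OF linear_swap])
qed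

lemma orthogonal_polygon_swap:
  assumes "orthogonal_polygon P"
  shows "orthogonal_polygon (prod.swap ` P)"
proof -
  obtain S where S: "finite S" "\<forall>s\<in>S. axis_segment s" "frontier P = \<Union>S"
    using assms unfolding orthogonal_polygon_def by blast
  have "\<exists>S'. finite S' \<and> (\<forall>s\<in>S'. axis_segment s) \<and> frontier (prod.swap ` P) = \<Union>S'"
    using S axis_segment_swap by (intro exI[of _ "(`) prod.swap ` S"]) (auto simp: frontier_swap)
  moreover have "continuous_on A (prod.swap :: pt \<Rightarrow> pt)" for A
    by (intro continuous_intros)
  then have "compact (prod.swap ` P)" "connected (prod.swap ` P)" "connected (prod.swap ` interior P)"
    using assms unfolding orthogonal_polygon_def
    by (blast intro: compact_continuous_image connected_continuous_image)+
  ultimately show ?thesis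
    using assms unfolding orthogonal_polygon_def by (simp add: interior_swap closure_swap)
qed

lemma swap_quadrant_complement:
  fixes v :: pt
  assumes "\<forall>q. dist q v < e \<longrightarrow> (q \<in> P \<longleftrightarrow> \<not> (sx * (fst q - fst v) > 0 \<and> sy * (snd q - snd v) > 0))"
  shows "\<forall>q. dist q (prod.swap v) < e \<longrightarrow>
    (q \<in> prod.swap ` P \<longleftrightarrow> \<not> (sy * (fst q - fst (prod.swap v)) > 0 \<and> sx * (snd q - snd (prod.swap v)) > 0))"
proof (intro allI impI)
  fix q assume "dist q (prod.swap v) < e"
  then have "dist (prod.swap q) v < e"
    using dist_swap[of q "prod.swap v"] by simp
  then have "prod.swap q \<in> P \<longleftrightarrow> \<not> (sx * (fst (prod.swap q) - fst v) > 0 \<and> sy * (snd (prod.swap q) - snd v) > 0)"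
    using assms by blast
  then show "q \<in> prod.swap ` P \<longleftrightarrow> \<not> (sy * (fst q - fst (prod.swap v)) > 0 \<and> sx * (snd q - snd (prod.swap v)) > 0)"
    by (simp add: mem_swap_image_iff conj_commute)
qed

lemma reflex_vertex_swap:
  assumes "reflex_vertex P v"
  shows "reflex_vertex (prod.swap ` P) (prod.swap v)"
proof -
  obtain e sx sy where "v \<in> P" "e > 0" "sx \<in> {-1, 1}" "sy \<in> {-1, 1}"
    and M: "\<forall>q. dist q v < e \<longrightarrow> (q \<in> P \<longleftrightarrow> \<not> (sx * (fst q - fst v) > 0 \<and> sy * (snd q - snd v) > 0))"
    using assms unfolding reflex_vertex_def by blast
  then show ?thesis
    using swap_quadrant_complement[OF M] unfolding reflex_vertex_def by blast
qed

lemma swap_mem_ray: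
  assumes "x \<in> ray P v d"
  shows "prod.swap x \<in> ray (prod.swap ` P) (prod.swap v) (prod.swap d)"
proof -
  obtain t where "x = v + t *\<^sub>R d" "t \<ge> 0" "\<forall>s. 0 < s \<and> s < t \<longrightarrow> v + s *\<^sub>R d \<in> interior P"
    using assms unfolding ray_def by blast
  moreover have swap_line: "prod.swap (v + s *\<^sub>R d) = prod.swap v + s *\<^sub>R prod.swap d" for s
    by (simp add: prod_eq_iff)
  ultimately have "prod.swap x = prod.swap v + t *\<^sub>R prod.swap d" "t \<ge> 0"
    "\<forall>s. 0 < s \<and> s < t \<longrightarrow> prod.swap v + s *\<^sub>R prod.swap d \<in> interior (prod.swap ` P)"
    by (auto simp: interior_swap simp del: swap_simp) (metis image_eqI swap_line)
  then show ?thesis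
    unfolding ray_def by blast
qed

lemma swap_mem_cuts:
  assumes "x \<in> cuts P"
  shows "prod.swap x \<in> cuts (prod.swap ` P)"
proof -
  obtain v d where v: "reflex_vertex P v" and d: "d \<in> axis_dirs" and x: "x \<in> ray P v d"
    using assms unfolding cuts_def by blast
  have "prod.swap d \<in> axis_dirs"
    using d by (auto simp: axis_dirs_def)
  then have "ray (prod.swap ` P) (prod.swap v) (prod.swap d) \<subseteq> cuts (prod.swap ` P)"
    unfolding cuts_def using reflex_vertex_swap[OF v] by blast
  then show ?thesis
    using swap_mem_ray[OF x] by blast
qed

lemma rect_swap: "prod.swap ` rect g p = rect (prod.swap g) (prod.swap p)"
  by (auto simp: set_eq_iff mem_swap_image_iff rect_def)

lemma pos_area_rect_swap:
  assumes "pos_area_rect R"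
  shows "pos_area_rect (prod.swap ` R)"
proof -
  obtain a1 b1 a2 b2 where "a1 < b1" "a2 < b2"
    and R: "R = {q. a1 \<le> fst q \<and> fst q \<le> b1 \<and> a2 \<le> snd q \<and> snd q \<le> b2}"
    using assms unfolding pos_area_rect_def by blast
  moreover have "prod.swap ` R = {q. a2 \<le> fst q \<and> fst q \<le> b2 \<and> a1 \<le> snd q \<and> snd q \<le> b1}"
    unfolding R by (auto simp: mem_swap_image_iff)
  ultimately show ?thesis
    unfolding pos_area_rect_def by blast
qed


section \<open>Quadrants and reflex vertices\<close>

definition quadrant :: "pt \<Rightarrow> real \<Rightarrow> real \<Rightarrow> pt set" where
  "quadrant v a b = {q. 0 < a * (fst q - fst v) \<and> 0 < b * (snd q - snd v)}"

lemma convex_quadrant: "convex (quadrant v a b)"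
proof -
  have "quadrant v a b = {q. inner (a, 0) q > a * fst v} \<inter> {q. inner (0, b) q > b * snd v}"
    by (auto simp: quadrant_def inner_prod_def algebra_simps)
  then show ?thesis
    by (simp add: convex_Int convex_halfspace_gt)
qed

lemma quadrant_ball_in_or_out:
  assumes "\<And>z. z \<in> frontier P \<Longrightarrow> dist z v < \<delta> \<Longrightarrow> fst z = fst v \<or> snd z = snd v"
  shows "ball v \<delta> \<inter> quadrant v a b \<subseteq> P \<or> ball v \<delta> \<inter> quadrant v a b \<inter> P = {}"
proof (rule ccontr)
  let ?Q = "ball v \<delta> \<inter> quadrant v a b"
  assume "\<not> ?thesis"
  then have "?Q \<inter> frontier P \<noteq> {}"
    by (intro connected_Int_frontier convex_connected convex_Int convex_ball convex_quadrant) auto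
  then show False
    using assms by (fastforce simp: quadrant_def dist_commute)
qed

lemma closure_quadrant_ball:
  assumes "dist w v < \<delta>" "a \<in> {-1, 1}" "b \<in> {-1, 1}"
    and "0 \<le> a * (fst w - fst v)" "0 \<le> b * (snd w - snd v)"
  shows "w \<in> closure (ball v \<delta> \<inter> quadrant v a b)"
  unfolding closure_approachable
proof (intro allI impI)
  fix e :: real assume "e > 0"
  define h where "h = min e (\<delta> - dist w v) / 4"
  have h: "0 < h" "2 * h < e" "2 * h < \<delta> - dist w v"
    using \<open>e > 0\<close> assms(1) by (auto simp: h_def)
  define y where "y = (fst w + a * h, snd w + b * h)"
  have "dist y w \<le> 2 * h"
    using dist_le_abs_fst_plus_abs_snd[of y w] assms(2,3) h(1) by (auto simp: y_def)
  moreover have "dist y v \<le> dist y w + dist w v"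
    by (rule dist_triangle)
  moreover have "a * (fst y - fst v) = a * (fst w - fst v) + h"
    "b * (snd y - snd v) = b * (snd w - snd v) + h"
    using assms(2,3) by (auto simp: y_def algebra_simps)
  ultimately have "y \<in> ball v \<delta> \<inter> quadrant v a b" "dist y w < e"
    using h assms(4,5) by (auto simp: quadrant_def dist_commute)
  then show "\<exists>y\<in>ball v \<delta> \<inter> quadrant v a b. dist y w < e"
    by blast
qed

lemma open_meets_quadrant_ball:
  assumes "open U" "w \<in> U" "dist w v < \<delta>" "a \<in> {-1, 1}" "b \<in> {-1, 1}"
    and "0 \<le> a * (fst w - fst v)" "0 \<le> b * (snd w - snd v)"
  shows "U \<inter> (ball v \<delta> \<inter> quadrant v a b) \<noteq> {}"
  using closure_quadrant_ball[OF assms(3-7)] assms(1,2) open_Int_closure_eq_empty by blast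

lemma half_ball_subset:
  fixes v :: pt
  assumes "closed P"
    and axes: "\<And>z. z \<in> frontier P \<Longrightarrow> dist z v < \<delta> \<Longrightarrow> fst z = fst v \<or> snd z = snd v"
    and s: "s \<in> {-1, 1}" and r: "0 < r" "r < \<delta>"
    and axis_point: "(fst v, snd v + s * r) \<in> interior P"
  shows "ball v \<delta> \<inter> {q. 0 \<le> s * (snd q - snd v)} \<subseteq> P"
proof
  have upper: "ball v \<delta> \<inter> quadrant v a s \<subseteq> P" if a: "a \<in> {-1, 1}" for a
  proof -
    let ?w = "(fst v, snd v + s * r)"
    have "dist ?w v < \<delta>"
      using dist_le_abs_fst_plus_abs_snd[of ?w v] s r by (auto simp: abs_mult)
    moreover have "0 \<le> s * (snd ?w - snd v)"
      using s r by auto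
    ultimately have "interior P \<inter> (ball v \<delta> \<inter> quadrant v a s) \<noteq> {}"
      using open_meets_quadrant_ball[OF open_interior axis_point _ a s] by simp
    then show ?thesis
      using quadrant_ball_in_or_out[OF axes, where a = a and b = s] interior_subset by blast
  qed
  fix q assume q: "q \<in> ball v \<delta> \<inter> {q. 0 \<le> s * (snd q - snd v)}"
  define a where "a = (if fst v \<le> fst q then 1 else -1 :: real)"
  have "a \<in> {-1, 1}" "0 \<le> a * (fst q - fst v)"
    by (auto simp: a_def)
  then have "q \<in> closure (ball v \<delta> \<inter> quadrant v a s)"
    using q s by (intro closure_quadrant_ball) (auto simp: dist_commute)
  then show "q \<in> P"
    using closure_mono[OF upper] \<open>a \<in> {-1, 1}\<close> closure_closed[OF \<open>closed P\<close>] by blast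
qed

lemma half_ball_near_axis:
  fixes v :: pt
  assumes op: "orthogonal_polygon P" and s: "s \<in> {-1, 1}" and "0 < \<rho>"
    and axis: "\<And>r. 0 < r \<Longrightarrow> r \<le> \<rho> \<Longrightarrow> (fst v, snd v + s * r) \<in> interior P"
  obtains \<delta> where "0 < \<delta>" "\<delta> \<le> \<rho>"
    "\<And>z. z \<in> frontier P \<Longrightarrow> dist z v < \<delta> \<Longrightarrow> fst z = fst v \<or> snd z = snd v"
    "ball v \<delta> \<inter> {q. 0 \<le> s * (snd q - snd v)} \<subseteq> P"
proof -
  obtain \<delta>0 where "\<delta>0 > 0"
    and axes: "\<And>z. z \<in> frontier P \<Longrightarrow> dist z v < \<delta>0 \<Longrightarrow> fst z = fst v \<or> snd z = snd v"
    using frontier_locally_on_axes[OF op] by blast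
  define \<delta> where "\<delta> = min \<delta>0 \<rho>"
  have "0 < \<delta>" "\<delta> \<le> \<rho>"
    using \<open>\<delta>0 > 0\<close> \<open>0 < \<rho>\<close> by (simp_all add: \<delta>_def)
  moreover have axes_\<delta>: "fst z = fst v \<or> snd z = snd v" if "z \<in> frontier P" "dist z v < \<delta>" for z
    using axes that by (simp add: \<delta>_def)
  moreover have "ball v \<delta> \<inter> {q. 0 \<le> s * (snd q - snd v)} \<subseteq> P"
    using half_ball_subset[OF orthogonal_polygon_closed[OF op] axes_\<delta> s, where r = "\<delta> / 2"]
      axis[of "\<delta> / 2"] calculation(1,2) by simp
  ultimately show thesis
    using that by blast
qed

lemma closure_interior_meets_quadrant:
  fixes v :: pt
  assumes w: "w \<in> closure (interior P)" "dist w v < \<delta>" and b: "b \<in> {-1, 1}" "0 < b * (snd w - snd v)"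
  obtains a where "a \<in> {-1, 1}" "interior P \<inter> (ball v \<delta> \<inter> quadrant v a b) \<noteq> {}"
proof -
  define \<epsilon> where "\<epsilon> = min (\<delta> - dist w v) (b * (snd w - snd v))"
  have "\<epsilon> > 0"
    using w(2) b(2) by (simp add: \<epsilon>_def)
  then obtain u where u: "u \<in> interior P" "dist u w < \<epsilon>"
    using w(1) closure_approachable by blast
  then have "dist u v < \<delta>"
    using dist_triangle[of u v w] by (simp add: \<epsilon>_def)
  have "\<bar>b * (snd u - snd w)\<bar> < b * (snd w - snd v)"
    using abs_snd_diff_le_dist[of u w] u(2) b(1) by (auto simp: \<epsilon>_def)
  then have "0 \<le> b * (snd u - snd v)"
    by (simp add: algebra_simps)
  define a where "a = (if fst v \<le> fst u then 1 else -1 :: real)"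
  have "a \<in> {-1, 1}" "0 \<le> a * (fst u - fst v)"
    by (auto simp: a_def)
  then show thesis
    using that open_meets_quadrant_ball[OF open_interior u(1) \<open>dist u v < \<delta>\<close> _ b(1)]
      \<open>0 \<le> b * (snd u - snd v)\<close> by blast
qed

lemma ball_cover_lower_quadrants:
  fixes v :: pt
  assumes upper: "ball v \<delta> \<inter> {q. 0 \<le> s * (snd q - snd v)} \<subseteq> P"
    and diameter: "\<And>q. q \<in> ball v \<delta> \<Longrightarrow> fst q = fst v \<Longrightarrow> q \<in> P"
  shows "ball v \<delta> \<subseteq> P \<union> (ball v \<delta> \<inter> quadrant v 1 (- s)) \<union> (ball v \<delta> \<inter> quadrant v (-1) (- s))"
proof
  fix q assume q: "q \<in> ball v \<delta>"
  show "q \<in> P \<union> (ball v \<delta> \<inter> quadrant v 1 (- s)) \<union> (ball v \<delta> \<inter> quadrant v (-1) (- s))"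
  proof (cases "0 \<le> s * (snd q - snd v) \<or> fst q = fst v")
    case True
    then show ?thesis
      using q upper diameter by blast
  next
    case False
    then have "fst q < fst v \<or> fst v < fst q" "0 < - s * (snd q - snd v)"
      by auto
    then show ?thesis
      using q by (auto simp: quadrant_def)
  qed
qed

lemma lower_quadrant_meets:
  fixes v :: pt
  assumes op: "orthogonal_polygon P" and s: "s \<in> {-1, 1}" and "0 < \<delta>"
    and diameter: "\<And>q. q \<in> ball v \<delta> \<Longrightarrow> fst q = fst v \<Longrightarrow> q \<in> P"
  obtains a where "a \<in> {-1, 1}" "ball v \<delta> \<inter> quadrant v a (- s) \<inter> P \<noteq> {}"
proof -
  define w where "w = (fst v, snd v - s * (\<delta> / 2))"
  have "- s \<in> {-1, 1}"
    using s by auto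
  have "dist w v < \<delta>"
    using dist_le_abs_fst_plus_abs_snd[of w v] s \<open>0 < \<delta>\<close> by (auto simp: w_def)
  then have "w \<in> closure (interior P)"
    using diameter[of w] orthogonal_polygon_closure_interior[OF op] by (simp add: w_def dist_commute)
  moreover have "0 < - s * (snd w - snd v)"
    using s \<open>0 < \<delta>\<close> by (auto simp: w_def)
  ultimately obtain a where "a \<in> {-1, 1}" "interior P \<inter> (ball v \<delta> \<inter> quadrant v a (- s)) \<noteq> {}"
    by (rule closure_interior_meets_quadrant[OF _ \<open>dist w v < \<delta>\<close> \<open>- s \<in> {-1, 1}\<close>])
  then show thesis
    using that interior_subset by blast
qed

lemma reflex_vertex_if_half_ball_subset:
  fixes v :: pt
  assumes op: "orthogonal_polygon P" and v: "v \<in> frontier P" and s: "s \<in> {-1, 1}" and "0 < \<delta>"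
    and axes: "\<And>z. z \<in> frontier P \<Longrightarrow> dist z v < \<delta> \<Longrightarrow> fst z = fst v \<or> snd z = snd v"
    and upper: "ball v \<delta> \<inter> {q. 0 \<le> s * (snd q - snd v)} \<subseteq> P"
    and diameter: "\<And>q. q \<in> ball v \<delta> \<Longrightarrow> fst q = fst v \<Longrightarrow> q \<in> P"
  shows "reflex_vertex P v"
proof -
  let ?L = "\<lambda>a. ball v \<delta> \<inter> quadrant v a (- s)"
  note cover = ball_cover_lower_quadrants[OF upper diameter]
  have in_or_out: "?L a \<subseteq> P \<or> ?L a \<inter> P = {}" for a
    using quadrant_ball_in_or_out[OF axes] .
  \<comment> \<open>Exactly one lower quadrant is missing: not both are present since v is a frontier point,
    and not both are absent since the diameter below v lies in the closure of the interior.\<close>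
  have not_both_in: "\<not> (?L 1 \<subseteq> P \<and> ?L (-1) \<subseteq> P)"
  proof
    assume "?L 1 \<subseteq> P \<and> ?L (-1) \<subseteq> P"
    then have "ball v \<delta> \<subseteq> P"
      using cover by blast
    then have "v \<in> interior P"
      using \<open>0 < \<delta>\<close> by (meson centre_in_ball interior_maximal open_ball subsetD)
    then show False
      using v by (simp add: frontier_def)
  qed
  obtain a0 where a0: "a0 \<in> {-1, 1}" "?L a0 \<inter> P = {}" "?L (- a0) \<subseteq> P"
  proof (cases "?L 1 \<subseteq> P")
    case True
    then show thesis
      using that[of "-1"] not_both_in in_or_out[of "-1"] by auto
  next
    case False
    obtain a where "a \<in> {-1, 1}" "?L a \<inter> P \<noteq> {}"
      by (rule lower_quadrant_meets[OF op s \<open>0 < \<delta>\<close> diameter])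
    then have "?L 1 \<inter> P = {}" "?L (-1) \<inter> P \<noteq> {}"
      using False in_or_out[of 1] by auto
    then show thesis
      using that[of 1] in_or_out[of "-1"] by auto
  qed
  have "q \<in> P \<longleftrightarrow> \<not> (a0 * (fst q - fst v) > 0 \<and> - s * (snd q - snd v) > 0)" if "dist q v < \<delta>" for q
  proof -
    have "q \<in> ball v \<delta>"
      using that by (simp add: dist_commute)
    then have "q \<in> P \<or> q \<in> ?L 1 \<or> q \<in> ?L (-1)"
      using cover by blast
    then show ?thesis
      using a0 \<open>q \<in> ball v \<delta>\<close> by (auto simp: quadrant_def)
  qed
  moreover have "- s \<in> {-1, 1}"
    using s by auto
  ultimately show ?thesis
    unfolding reflex_vertex_def
    using frontier_subset_closed[OF orthogonal_polygon_closed[OF op]] v \<open>0 < \<delta>\<close> a0(1) by blast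
qed

lemma reflex_vertexI:
  fixes v :: pt
  assumes op: "orthogonal_polygon P" and v: "v \<in> frontier P" and s: "s \<in> {-1, 1}" and "0 < \<rho>"
    and above: "\<And>r. 0 < r \<Longrightarrow> r \<le> \<rho> \<Longrightarrow> (fst v, snd v + s * r) \<in> interior P"
    and below: "\<And>r. 0 < r \<Longrightarrow> r \<le> \<rho> \<Longrightarrow> (fst v, snd v - s * r) \<in> P"
  shows "reflex_vertex P v"
proof -
  obtain \<delta> where \<delta>: "0 < \<delta>" "\<delta> \<le> \<rho>"
    and axes: "\<And>z. z \<in> frontier P \<Longrightarrow> dist z v < \<delta> \<Longrightarrow> fst z = fst v \<or> snd z = snd v"
    and upper: "ball v \<delta> \<inter> {q. 0 \<le> s * (snd q - snd v)} \<subseteq> P"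
    by (rule half_ball_near_axis[OF op s \<open>0 < \<rho>\<close> above]) blast+
  have "q \<in> P" if "q \<in> ball v \<delta>" "fst q = fst v" for q
  proof (cases "0 \<le> s * (snd q - snd v)")
    case True
    then show ?thesis using upper that by blast
  next
    case False
    have "\<bar>snd q - snd v\<bar> < \<delta>"
      using abs_snd_diff_le_dist[of q v] that(1) by (simp add: dist_commute)
    then have "- s * (snd q - snd v) \<le> \<rho>"
      using s \<delta>(2) by (auto simp: abs_less_iff)
    then have "(fst v, snd v - s * (- s * (snd q - snd v))) \<in> P"
      using below[of "- s * (snd q - snd v)"] False by simp
    then show ?thesis
      using that(2) s by (cases q) auto
  qed
  then show ?thesis
    using reflex_vertex_if_half_ball_subset[OF op v s \<delta>(1) axes upper] by blast
qed


section \<open>Thickening the sides of a guarded rectangle\<close>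

lemma uniform_neighbourhood_compact:
  fixes K :: "'a::metric_space set"
  assumes "compact K" and local: "\<And>k. k \<in> K \<Longrightarrow> \<exists>r>0. ball k r \<inter> H \<subseteq> P"
  shows "\<exists>e>0. \<forall>k\<in>K. ball k e \<inter> H \<subseteq> P"
proof -
  obtain r where r: "\<And>k. k \<in> K \<Longrightarrow> r k > 0 \<and> ball k (r k) \<inter> H \<subseteq> P"
    using local by metis
  have "K \<subseteq> \<Union>((\<lambda>k. ball k (r k)) ` K)"
    using r by force
  then obtain e where "e > 0" and e: "\<And>x. x \<in> K \<Longrightarrow> \<exists>G\<in>(\<lambda>k. ball k (r k)) ` K. ball x e \<subseteq> G"
    by (rule Heine_Borel_lemma[OF assms(1)]) auto
  have "ball x e \<inter> H \<subseteq> P" if x: "x \<in> K" for x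
  proof -
    obtain k where "k \<in> K" "ball x e \<subseteq> ball k (r k)"
      using e[OF x] by blast
    then show ?thesis
      using r by blast
  qed
  then show ?thesis
    using \<open>e > 0\<close> by blast
qed

lemma first_exit_time:
  fixes f :: "real \<Rightarrow> 'a::topological_space"
  assumes "continuous_on {0..t} f" "open U" "f 0 \<in> U" "f t \<notin> U" "0 \<le> t"
  shows "\<exists>t0. 0 < t0 \<and> t0 \<le> t \<and> f t0 \<notin> U \<and> (\<forall>r. 0 \<le> r \<and> r < t0 \<longrightarrow> f r \<in> U)"
proof -
  define T where "T = {0..t} \<inter> f -` (- U)"
  have "closed T"
    unfolding T_def using assms(1,2) by (intro continuous_closed_preimage) auto
  moreover have "t \<in> T" "bdd_below T"
    using assms(4,5) by (auto simp: T_def intro: bdd_belowI[of _ 0])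
  ultimately have "Inf T \<in> T"
    using closed_contains_Inf by blast
  have lower: "Inf T \<le> r" if "r \<in> T" for r
    using \<open>bdd_below T\<close> that by (rule cInf_lower[rotated])
  show ?thesis
  proof (intro exI conjI allI impI)
    have "Inf T \<noteq> 0"
      using \<open>Inf T \<in> T\<close> assms(3) by (auto simp: T_def)
    then show "0 < Inf T"
      using \<open>Inf T \<in> T\<close> by (simp add: T_def)
    show "Inf T \<le> t"
      using lower[OF \<open>t \<in> T\<close>] .
    show "f (Inf T) \<notin> U"
      using \<open>Inf T \<in> T\<close> by (simp add: T_def)
    show "f r \<in> U" if "0 \<le> r \<and> r < Inf T" for r
      using that lower[of r] \<open>Inf T \<le> t\<close> by (force simp: T_def)
  qed
qed

lemma vertical_segment_interior:
  assumes op: "orthogonal_polygon P" and x: "x \<in> interior P" "x \<notin> cuts P"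
    and segment: "\<And>y. min (snd x) b \<le> y \<Longrightarrow> y \<le> max (snd x) b \<Longrightarrow> (fst x, y) \<in> P"
    and y: "min (snd x) b \<le> y" "y \<le> max (snd x) b" "y \<noteq> b"
  shows "(fst x, y) \<in> interior P"
proof (rule ccontr)
  define s where "s = (if b \<le> snd x then 1 else -1 :: real)"
  define L where "L = \<bar>snd x - b\<bar>"
  define f where "f t = (fst x, snd x - s * t)" for t
  have s: "s \<in> {-1, 1}"
    by (simp add: s_def)
  have f_in_P: "f t \<in> P" if "0 \<le> t" "t \<le> L" for t
    using segment[of "snd x - s * t"] that by (auto simp: f_def s_def L_def)
  define t where "t = s * (snd x - y)"
  have "0 \<le> t" "t < L" "f t = (fst x, y)"
    using y by (auto simp: t_def f_def s_def L_def)
  assume "(fst x, y) \<notin> interior P"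
  then have "f t \<notin> interior P"
    using \<open>f t = (fst x, y)\<close> by simp
  have "continuous_on {0..t} f"
    unfolding f_def by (intro continuous_intros)
  moreover have "f 0 \<in> interior P"
    using x(1) by (simp add: f_def)
  ultimately obtain t0 where "0 < t0" "t0 \<le> t" "f t0 \<notin> interior P"
    and before: "\<And>r. 0 \<le> r \<Longrightarrow> r < t0 \<Longrightarrow> f r \<in> interior P"
    using first_exit_time[of t f "interior P", OF _ open_interior _ \<open>f t \<notin> interior P\<close> \<open>0 \<le> t\<close>]
    by blast
  have "t0 < L"
    using \<open>t0 \<le> t\<close> \<open>t < L\<close> by simp
  \<comment> \<open>The first point where the segment leaves the interior is a reflex vertex whose ray runs back to x.\<close>
  define v where "v = f t0"
  have shifted: "f (t0 - r) = (fst v, snd v + s * r)" "f (t0 + r) = (fst v, snd v - s * r)"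
    "v + r *\<^sub>R (0, s) = f (t0 - r)" for r
    by (simp_all add: v_def f_def algebra_simps)
  have "v \<in> frontier P"
    using f_in_P[of t0] \<open>f t0 \<notin> interior P\<close> \<open>0 < t0\<close> \<open>t0 < L\<close> orthogonal_polygon_closed[OF op]
    by (simp add: v_def frontier_def closure_closed)
  then have "reflex_vertex P v"
  proof (rule reflex_vertexI[OF op _ s])
    show "0 < min t0 (L - t0)"
      using \<open>0 < t0\<close> \<open>t0 < L\<close> by simp
    show "(fst v, snd v + s * r) \<in> interior P" if "0 < r" "r \<le> min t0 (L - t0)" for r
      using before[of "t0 - r"] that shifted(1) by simp
    show "(fst v, snd v - s * r) \<in> P" if "0 < r" "r \<le> min t0 (L - t0)" for r
      using f_in_P[of "t0 + r"] that \<open>0 < t0\<close> shifted(2) by simp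
  qed
  moreover have "x \<in> ray P v (0, s)"
    unfolding ray_def
  proof (intro CollectI exI conjI allI impI)
    show "x = v + t0 *\<^sub>R (0, s)"
      using shifted(3)[of t0] by (simp add: f_def)
    show "v + r *\<^sub>R (0, s) \<in> interior P" if "0 < r \<and> r < t0" for r
      using before[of "t0 - r"] that shifted(3) by simp
  qed (use \<open>0 < t0\<close> in simp)
  moreover have "(0, s) \<in> axis_dirs"
    using s by (auto simp: axis_dirs_def)
  ultimately show False
    using x(2) unfolding cuts_def by blast
qed

lemma vertical_strip_if_locally_in:
  fixes a b c :: real and H P :: "pt set"
  assumes local: "\<And>y. a \<le> y \<Longrightarrow> y \<le> b \<Longrightarrow> \<exists>r>0. ball (c, y) r \<inter> H \<subseteq> P"
  shows "\<exists>e>0. \<forall>q. \<bar>fst q - c\<bar> < e \<longrightarrow> a \<le> snd q \<longrightarrow> snd q \<le> b \<longrightarrow> q \<in> H \<longrightarrow> q \<in> P"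
proof -
  let ?K = "Pair c ` {a..b}"
  have "compact ?K"
    by (intro compact_continuous_image compact_Icc continuous_intros)
  moreover have "\<exists>r>0. ball k r \<inter> H \<subseteq> P" if "k \<in> ?K" for k
    using that local by auto
  ultimately obtain e where "e > 0" and e: "\<forall>k\<in>?K. ball k e \<inter> H \<subseteq> P"
    using uniform_neighbourhood_compact by blast
  have "q \<in> P" if q: "\<bar>fst q - c\<bar> < e" "a \<le> snd q" "snd q \<le> b" "q \<in> H" for q
  proof -
    have "dist (c, snd q) q < e"
      using q(1) dist_le_abs_fst_plus_abs_snd[of "(c, snd q)" q] by (simp add: abs_minus_commute)
    moreover have "ball (c, snd q) e \<inter> H \<subseteq> P"
      using e q(2,3) by auto
    ultimately show ?thesis
      using q(4) by auto
  qed
  then show ?thesis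
    using \<open>e > 0\<close> by blast
qed

lemma vertical_strip_subset:
  assumes op: "orthogonal_polygon P" and x: "x \<in> interior P" "x \<notin> cuts P"
    and segment: "\<And>y. min (snd x) b \<le> y \<Longrightarrow> y \<le> max (snd x) b \<Longrightarrow> (fst x, y) \<in> P"
  shows "\<exists>\<epsilon>>0. \<forall>q. \<bar>fst q - fst x\<bar> < \<epsilon> \<longrightarrow> min (snd x) b \<le> snd q \<longrightarrow> snd q \<le> max (snd x) b \<longrightarrow> q \<in> P"
proof -
  define s where "s = (if b \<le> snd x then 1 else -1 :: real)"
  let ?H = "{q. min (snd x) b \<le> snd q \<and> snd q \<le> max (snd x) b}"
  have s: "s \<in> {-1, 1}"
    by (simp add: s_def)
  have end_half_ball: "\<exists>r>0. ball (fst x, b) r \<inter> {q. 0 \<le> s * (snd q - b)} \<subseteq> P"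
  proof (cases "b = snd x")
    case True
    then have "(fst x, b) \<in> interior P"
      using x(1) by simp
    then show ?thesis
      using interior_subset by (meson le_infI1 open_contains_ball_eq open_interior order_trans)
  next
    case False
    then have "0 < \<bar>snd x - b\<bar>"
      by simp
    have axis: "(fst (fst x, b), snd (fst x, b) + s * r) \<in> interior P" if r: "0 < r" "r \<le> \<bar>snd x - b\<bar>" for r
    proof -
      have "min (snd x) b \<le> b + s * r" "b + s * r \<le> max (snd x) b" "b + s * r \<noteq> b"
        using r by (auto simp: s_def)
      then show ?thesis
        using vertical_segment_interior[OF op x segment] by simp
    qed
    obtain \<delta> where "0 < \<delta>" "ball (fst x, b) \<delta> \<inter> {q. 0 \<le> s * (snd q - snd (fst x, b))} \<subseteq> P"
      by (rule half_ball_near_axis[OF op s \<open>0 < \<bar>snd x - b\<bar>\<close> axis]) blast+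
    then show ?thesis
      by auto
  qed
  have "\<exists>r>0. ball (fst x, y) r \<inter> ?H \<subseteq> P" if "min (snd x) b \<le> y" "y \<le> max (snd x) b" for y
  proof (cases "y = b")
    case True
    have "?H \<subseteq> {q. 0 \<le> s * (snd q - b)}"
      by (auto simp: s_def)
    then show ?thesis
      using end_half_ball True by blast
  next
    case False
    then have "(fst x, y) \<in> interior P"
      using vertical_segment_interior[OF op x segment that] by simp
    then show ?thesis
      using interior_subset by (meson le_infI1 open_contains_ball_eq open_interior order_trans)
  qed
  then show ?thesis
    using vertical_strip_if_locally_in[of "min (snd x) b" "max (snd x) b" "fst x" ?H P] by simp
qed

lemma horizontal_strip_subset:
  assumes op: "orthogonal_polygon P" and x: "x \<in> interior P" "x \<notin> cuts P"
    and segment: "\<And>y. min (fst x) b \<le> y \<Longrightarrow> y \<le> max (fst x) b \<Longrightarrow> (y, snd x) \<in> P"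
  shows "\<exists>\<epsilon>>0. \<forall>q. \<bar>snd q - snd x\<bar> < \<epsilon> \<longrightarrow> min (fst x) b \<le> fst q \<longrightarrow> fst q \<le> max (fst x) b \<longrightarrow> q \<in> P"
proof -
  have x': "prod.swap x \<in> interior (prod.swap ` P)" "prod.swap x \<notin> cuts (prod.swap ` P)"
    using x swap_mem_cuts[of "prod.swap x" "prod.swap ` P"] by (auto simp: interior_swap)
  have segment': "(fst (prod.swap x), y) \<in> prod.swap ` P"
    if "min (snd (prod.swap x)) b \<le> y" "y \<le> max (snd (prod.swap x)) b" for y
    using segment[of y] that by (simp add: mem_swap_image_iff)
  obtain \<epsilon> where "\<epsilon> > 0" and strip: "\<forall>q. \<bar>fst q - fst (prod.swap x)\<bar> < \<epsilon> \<longrightarrow>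
      min (snd (prod.swap x)) b \<le> snd q \<longrightarrow> snd q \<le> max (snd (prod.swap x)) b \<longrightarrow> q \<in> prod.swap ` P"
    using vertical_strip_subset[OF orthogonal_polygon_swap[OF op] x', of b] segment' by blast
  have "q \<in> P" if q: "\<bar>snd q - snd x\<bar> < \<epsilon>" "min (fst x) b \<le> fst q" "fst q \<le> max (fst x) b" for q
    using strip[rule_format, of "prod.swap q"] q by (simp add: mem_swap_image_iff)
  then show ?thesis
    using \<open>\<epsilon> > 0\<close> by blast
qed


lemma between_or_abs_diff_le:
  fixes a b c z :: real
  assumes "min a c \<le> z" "z \<le> max a c"
  shows "(min a b \<le> z \<and> z \<le> max a b) \<or> \<bar>z - b\<bar> \<le> \<bar>c - b\<bar>"
  using assms by (auto simp: min_def max_def split: if_splits)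

lemma mem_rect_near:
  assumes q: "q \<in> rect g y" and y: "\<bar>fst y - fst x\<bar> < \<epsilon>" "\<bar>snd y - snd x\<bar> < \<epsilon>"
  shows "q \<in> rect g x
    \<or> (\<bar>fst q - fst x\<bar> < \<epsilon> \<and> min (snd g) (snd x) \<le> snd q \<and> snd q \<le> max (snd g) (snd x))
    \<or> (\<bar>snd q - snd x\<bar> < \<epsilon> \<and> min (fst g) (fst x) \<le> fst q \<and> fst q \<le> max (fst g) (fst x))
    \<or> (\<bar>fst q - fst x\<bar> < \<epsilon> \<and> \<bar>snd q - snd x\<bar> < \<epsilon>)"
proof -
  have "(min (fst g) (fst x) \<le> fst q \<and> fst q \<le> max (fst g) (fst x)) \<or> \<bar>fst q - fst x\<bar> \<le> \<bar>fst y - fst x\<bar>"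
    "(min (snd g) (snd x) \<le> snd q \<and> snd q \<le> max (snd g) (snd x)) \<or> \<bar>snd q - snd x\<bar> \<le> \<bar>snd y - snd x\<bar>"
    using q by (simp_all add: rect_def between_or_abs_diff_le)
  then have "(min (fst g) (fst x) \<le> fst q \<and> fst q \<le> max (fst g) (fst x)) \<or> \<bar>fst q - fst x\<bar> < \<epsilon>"
    "(min (snd g) (snd x) \<le> snd q \<and> snd q \<le> max (snd g) (snd x)) \<or> \<bar>snd q - snd x\<bar> < \<epsilon>"
    using y by linarith+
  then show ?thesis
    unfolding rect_def by blast
qed

lemma rect_subset_near:
  assumes op: "orthogonal_polygon P" and x: "x \<in> interior P" "x \<notin> cuts P"
    and R: "rect g x \<subseteq> P"
  shows "\<exists>\<epsilon>>0. \<forall>y. dist y x < \<epsilon> \<longrightarrow> rect g y \<subseteq> P"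
proof -
  have "(fst x, y) \<in> P" if "min (snd x) (snd g) \<le> y" "y \<le> max (snd x) (snd g)" for y
    using R that by (auto simp: rect_def min.commute max.commute)
  then obtain e1 where "e1 > 0" and e1: "\<forall>q. \<bar>fst q - fst x\<bar> < e1 \<longrightarrow>
      min (snd x) (snd g) \<le> snd q \<longrightarrow> snd q \<le> max (snd x) (snd g) \<longrightarrow> q \<in> P"
    using vertical_strip_subset[OF op x] by blast
  have "(y, snd x) \<in> P" if "min (fst x) (fst g) \<le> y" "y \<le> max (fst x) (fst g)" for y
    using R that by (auto simp: rect_def min.commute max.commute)
  then obtain e2 where "e2 > 0" and e2: "\<forall>q. \<bar>snd q - snd x\<bar> < e2 \<longrightarrow>
      min (fst x) (fst g) \<le> fst q \<longrightarrow> fst q \<le> max (fst x) (fst g) \<longrightarrow> q \<in> P"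
    using horizontal_strip_subset[OF op x] by blast
  obtain e3 where "e3 > 0" and e3: "ball x e3 \<subseteq> P"
    using x(1) interior_subset by (meson open_contains_ball_eq open_interior order_trans)
  define \<epsilon> where "\<epsilon> = min (min e1 e2) (e3 / 2)"
  have "rect g y \<subseteq> P" if y: "dist y x < \<epsilon>" for y
  proof
    fix q assume "q \<in> rect g y"
    moreover have "\<bar>fst y - fst x\<bar> < \<epsilon>" "\<bar>snd y - snd x\<bar> < \<epsilon>"
      using abs_fst_diff_le_dist[of y x] abs_snd_diff_le_dist[of y x] y by linarith+
    moreover have "q \<in> P" if "\<bar>fst q - fst x\<bar> < \<epsilon>" "\<bar>snd q - snd x\<bar> < \<epsilon>"
    proof -
      have "dist q x < e3"
        using that dist_le_abs_fst_plus_abs_snd[of q x] by (simp add: \<epsilon>_def)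
      then show ?thesis
        using e3 by (auto simp: dist_commute)
    qed
    ultimately show "q \<in> P"
      using mem_rect_near[of q g y x \<epsilon>] R e1[rule_format, of q] e2[rule_format, of q]
      by (auto simp: \<epsilon>_def min.commute max.commute)
  qed
  moreover have "\<epsilon> > 0"
    using \<open>e1 > 0\<close> \<open>e2 > 0\<close> \<open>e3 > 0\<close> by (simp add: \<epsilon>_def)
  ultimately show ?thesis
    by blast
qed


section \<open>Guarded points on a pixel\<close>

lemma between_iff_convex_combination:
  fixes a b z :: real
  shows "min a b \<le> z \<and> z \<le> max a b \<longleftrightarrow> (\<exists>u\<in>{0..1}. z = (1 - u) * a + u * b)"
proof -
  have "min a b \<le> z \<and> z \<le> max a b \<longleftrightarrow> z \<in> closed_segment a b"
    by (simp add: closed_segment_eq_real_ivl min_def max_def)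
  then show ?thesis
    by (auto simp: in_segment)
qed

lemma closed_rect_subset:
  assumes "closed P"
  shows "closed {y. rect g y \<subseteq> P}"
proof -
  define h where "h u w y = ((1 - u) * fst g + u * fst y, (1 - w) * snd g + w * snd y)" for u w :: real and y :: pt
  have rect_eq: "rect g y = {h u w y | u w. u \<in> {0..1} \<and> w \<in> {0..1}}" for y
  proof (intro subset_antisym subsetI)
    fix q assume q: "q \<in> rect g y"
    obtain u where "u \<in> {0..1}" "fst q = (1 - u) * fst g + u * fst y"
      using q between_iff_convex_combination[of "fst g" "fst y" "fst q"] by (auto simp: rect_def)
    moreover obtain w where "w \<in> {0..1}" "snd q = (1 - w) * snd g + w * snd y"
      using q between_iff_convex_combination[of "snd g" "snd y" "snd q"] by (auto simp: rect_def)
    ultimately have "q = h u w y" "u \<in> {0..1}" "w \<in> {0..1}"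
      by (simp_all add: h_def prod_eq_iff)
    then show "q \<in> {h u w y | u w. u \<in> {0..1} \<and> w \<in> {0..1}}"
      by blast
  next
    fix q assume "q \<in> {h u w y | u w. u \<in> {0..1} \<and> w \<in> {0..1}}"
    then obtain u w where "q = h u w y" "u \<in> {0..1}" "w \<in> {0..1}"
      by blast
    then have "fst q = (1 - u) * fst g + u * fst y" "snd q = (1 - w) * snd g + w * snd y"
      by (simp_all add: h_def)
    then have "min (fst g) (fst y) \<le> fst q \<and> fst q \<le> max (fst g) (fst y)"
      "min (snd g) (snd y) \<le> snd q \<and> snd q \<le> max (snd g) (snd y)"
      using between_iff_convex_combination \<open>u \<in> {0..1}\<close> \<open>w \<in> {0..1}\<close> by blast+
    then show "q \<in> rect g y"
      by (simp add: rect_def)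
  qed
  have "rect g y \<subseteq> P \<longleftrightarrow> (\<forall>u\<in>{0..1}. \<forall>w\<in>{0..1}. h u w y \<in> P)" for y
    unfolding rect_eq by blast
  then have "{y. rect g y \<subseteq> P} = (\<Inter>u\<in>{0..1}. \<Inter>w\<in>{0..1}. h u w -` P)"
    by blast
  moreover have "continuous (at y) (h u w)" for u w y
    unfolding h_def by (intro continuous_intros)
  ultimately show ?thesis
    using assms by (simp add: closed_INT continuous_closed_vimage)
qed

lemma connected_rect_subset_or_disjoint:
  assumes op: "orthogonal_polygon P" and C: "connected C" "C \<subseteq> interior P - cuts P"
  shows "C \<subseteq> {y. rect g y \<subseteq> P} \<or> C \<inter> {y. rect g y \<subseteq> P} = {}"
proof -
  let ?G = "{y. rect g y \<subseteq> P}"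
  have "C \<inter> ?G \<subseteq> interior ?G"
  proof
    fix y assume y: "y \<in> C \<inter> ?G"
    then obtain \<epsilon> where "\<epsilon> > 0" and near: "\<forall>y'. dist y' y < \<epsilon> \<longrightarrow> rect g y' \<subseteq> P"
      using rect_subset_near[OF op, of y g] C(2) by blast
    have "ball y \<epsilon> \<subseteq> ?G"
      using near by (simp add: subset_iff dist_commute)
    then show "y \<in> interior ?G"
      using \<open>\<epsilon> > 0\<close> by (meson centre_in_ball interior_maximal open_ball subsetD)
  qed
  moreover have "closed ?G"
    using closed_rect_subset[OF orthogonal_polygon_closed[OF op]] .
  ultimately have "interior ?G \<inter> C = {} \<or> - ?G \<inter> C = {}"
    using interior_subset[of ?G]
    by (intro connectedD[OF C(1) open_interior open_Compl]) auto
  then show ?thesis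
    using \<open>C \<inter> ?G \<subseteq> interior ?G\<close> by blast
qed

lemma pixelE:
  assumes "\<psi> \<in> pixels P"
  obtains C where "connected C" "C \<subseteq> interior P - cuts P" "\<psi> = closure C"
  using assms in_components_connected in_components_subset unfolding pixels_def by blast

lemma pixel_subset_polygon:
  assumes op: "orthogonal_polygon P" and "\<psi> \<in> pixels P"
  shows "\<psi> \<subseteq> P"
proof -
  obtain C where "C \<subseteq> interior P - cuts P" "\<psi> = closure C"
    by (rule pixelE[OF assms(2)])
  then show ?thesis
    using interior_subset closure_minimal[OF _ orthogonal_polygon_closed[OF op]] by blast
qed


section \<open>Pixel interiors avoid the cuts\<close>

definition rect_visibility_splits :: "pt set \<Rightarrow> pt \<Rightarrow> bool" where
  "rect_visibility_splits P p \<longleftrightarrow>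
     (\<exists>g n \<rho>. n \<noteq> 0 \<and> \<rho> > 0 \<and> (\<forall>c\<in>ball p \<rho>. rect g c \<subseteq> P \<longleftrightarrow> inner (c - p) n \<le> 0))"

lemma dense_in_ball_meets_halfspace:
  fixes p n :: "'a::real_inner"
  assumes "ball p r \<subseteq> closure C" "r > 0" "n \<noteq> 0"
  shows "\<exists>c\<in>C \<inter> ball p r. inner (c - p) n > 0"
proof -
  let ?U = "ball p r \<inter> {c. inner (c - p) n > 0}"
  have "open ?U"
    by (intro open_Int open_ball open_Collect_less continuous_intros)
  have "norm n > 0"
    using assms(3) by simp
  define c where "c = p + (r / (2 * norm n)) *\<^sub>R n"
  have "dist c p = r / 2"
    using \<open>r > 0\<close> \<open>norm n > 0\<close> by (simp add: c_def dist_norm)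
  moreover have "inner (c - p) n = r / (2 * norm n) * (norm n)\<^sup>2"
    by (simp add: c_def power2_norm_eq_inner)
  then have "inner (c - p) n = r * norm n / 2"
    using \<open>norm n > 0\<close> by (simp add: power2_eq_square)
  ultimately have "c \<in> ?U"
    using mult_pos_pos[OF \<open>r > 0\<close> \<open>norm n > 0\<close>] \<open>r > 0\<close> by (simp add: dist_commute)
  then have "?U \<inter> C \<noteq> {}"
    using open_Int_closure_eq_empty[OF \<open>open ?U\<close>, of C] assms(1) by blast
  then show ?thesis
    by blast
qed

lemma pixel_interior_not_splits:
  assumes op: "orthogonal_polygon P" and \<psi>: "\<psi> \<in> pixels P" and p: "p \<in> interior \<psi>"
  shows "\<not> rect_visibility_splits P p"
proof
  assume "rect_visibility_splits P p"
  then obtain g n \<rho> where "n \<noteq> 0" "\<rho> > 0"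
    and split: "\<forall>c\<in>ball p \<rho>. rect g c \<subseteq> P \<longleftrightarrow> inner (c - p) n \<le> 0"
    unfolding rect_visibility_splits_def by blast
  obtain C where C: "connected C" "C \<subseteq> interior P - cuts P" "\<psi> = closure C"
    by (rule pixelE[OF \<psi>])
  obtain r where "r > 0" "ball p r \<subseteq> interior \<psi>"
    using p by (meson open_contains_ball_eq open_interior)
  then have "ball p r \<subseteq> closure C"
    using C(3) interior_subset by blast
  moreover have "ball p (min r \<rho>) \<subseteq> ball p r" "ball p (min r \<rho>) \<subseteq> ball p \<rho>"
    by (simp_all add: subset_ball)
  ultimately have dense: "ball p (min r \<rho>) \<subseteq> closure C" and "0 < min r \<rho>"
    using \<open>r > 0\<close> \<open>\<rho> > 0\<close> by auto
  obtain c1 where "c1 \<in> C" "c1 \<in> ball p \<rho>" "inner (c1 - p) (- n) > 0"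
    using dense_in_ball_meets_halfspace[OF dense \<open>0 < min r \<rho>\<close>] \<open>n \<noteq> 0\<close>
      \<open>ball p (min r \<rho>) \<subseteq> ball p \<rho>\<close> by (metis IntD1 IntD2 neg_equal_0_iff_equal subsetD)
  moreover obtain c2 where "c2 \<in> C" "c2 \<in> ball p \<rho>" "inner (c2 - p) n > 0"
    using dense_in_ball_meets_halfspace[OF dense \<open>0 < min r \<rho>\<close> \<open>n \<noteq> 0\<close>]
      \<open>ball p (min r \<rho>) \<subseteq> ball p \<rho>\<close> by blast
  ultimately have "c1 \<in> C \<inter> {y. rect g y \<subseteq> P}" "c2 \<in> C - {y. rect g y \<subseteq> P}"
    using split by auto
  then show False
    using connected_rect_subset_or_disjoint[OF op C(1,2), of g] by blast
qed

lemma chord_locally_in_near_side: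
  fixes v :: pt
  assumes e: "e > 0" and sx: "sx \<in> {-1, 1}" and sy: "sy \<in> {-1, 1}"
    and M: "\<forall>q. dist q v < e \<longrightarrow> (q \<in> P \<longleftrightarrow> \<not> (sx * (fst q - fst v) > 0 \<and> sy * (snd q - snd v) > 0))"
    and t: "t > 0" and p: "p = (fst v, snd v - sy * t)"
    and chord: "\<And>\<sigma>. 0 < \<sigma> \<Longrightarrow> \<sigma> < t \<Longrightarrow> (fst v, snd v - sy * \<sigma>) \<in> interior P"
    and p_interior: "p \<in> interior P"
    and y: "min (snd v + sy * (e / 2)) (snd p) \<le> y" "y \<le> max (snd v + sy * (e / 2)) (snd p)"
  shows "\<exists>r>0. ball (fst v, y) r \<inter> {q. sx * (fst q - fst v) \<le> 0} \<subseteq> P"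
proof (cases "sy * (snd v - y) \<le> 0")
  case True
  have "dist (fst v, y) v \<le> \<bar>y - snd v\<bar>"
    using dist_le_abs_fst_plus_abs_snd[of "(fst v, y)" v] by simp
  also have "\<dots> \<le> e / 2"
    using y True sy e t by (auto simp: p min_def max_def split: if_splits)
  finally have "dist (fst v, y) v < e"
    using e by simp
  moreover have "ball (fst v, y) (e - dist (fst v, y) v) \<inter> {q. sx * (fst q - fst v) \<le> 0} \<subseteq> P"
  proof
    fix q assume "q \<in> ball (fst v, y) (e - dist (fst v, y) v) \<inter> {q. sx * (fst q - fst v) \<le> 0}"
    then have "dist q v < e" "\<not> sx * (fst q - fst v) > 0"
      using dist_triangle[of q v "(fst v, y)"] by (auto simp: dist_commute)
    then show "q \<in> P"
      using M by blast
  qed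
  ultimately show ?thesis
    by (intro exI[of _ "e - dist (fst v, y) v"]) simp
next
  case False
  have "sy * (snd v - y) \<le> t"
    using y sy t e by (auto simp: p min_def max_def split: if_splits)
  moreover have "(fst v, y) = (fst v, snd v - sy * (sy * (snd v - y)))"
    using sy by auto
  ultimately have "(fst v, y) \<in> interior P"
    using chord[of "sy * (snd v - y)"] p_interior False
    by (cases "sy * (snd v - y) = t") (auto simp: p)
  then show ?thesis
    using interior_subset by (meson le_infI1 open_contains_ball_eq open_interior order_trans)
qed

lemma guard_beyond_reflex_vertex_sees_near_side:
  fixes v :: pt
  assumes e: "e > 0" and sx: "sx \<in> {-1, 1}" and sy: "sy \<in> {-1, 1}"
    and M: "\<forall>q. dist q v < e \<longrightarrow> (q \<in> P \<longleftrightarrow> \<not> (sx * (fst q - fst v) > 0 \<and> sy * (snd q - snd v) > 0))"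
    and t: "t > 0" and p: "p = (fst v, snd v - sy * t)"
    and chord: "\<And>\<sigma>. 0 < \<sigma> \<Longrightarrow> \<sigma> < t \<Longrightarrow> (fst v, snd v - sy * \<sigma>) \<in> interior P"
    and p_interior: "p \<in> interior P"
  shows "\<exists>\<rho>>0. \<forall>c\<in>ball p \<rho>. sx * (fst c - fst v) \<le> 0 \<longrightarrow> rect (fst v, snd v + sy * (e / 2)) c \<subseteq> P"
proof -
  define g where "g = (fst v, snd v + sy * (e / 2))"
  let ?H = "{q. sx * (fst q - fst v) \<le> 0}"
  have "\<exists>r>0. ball (fst v, y) r \<inter> ?H \<subseteq> P"
    if "min (snd g) (snd p) \<le> y" "y \<le> max (snd g) (snd p)" for y
    using chord_locally_in_near_side[OF e sx sy M t p chord p_interior] that by (simp add: g_def)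
  then obtain e' where "e' > 0" and strip: "\<forall>q. \<bar>fst q - fst v\<bar> < e' \<longrightarrow>
      min (snd g) (snd p) \<le> snd q \<longrightarrow> snd q \<le> max (snd g) (snd p) \<longrightarrow> q \<in> ?H \<longrightarrow> q \<in> P"
    using vertical_strip_if_locally_in[of "min (snd g) (snd p)" "max (snd g) (snd p)" "fst v" ?H P] by blast
  obtain r0 where "r0 > 0" and r0: "ball p r0 \<subseteq> P"
    using p_interior interior_subset by (meson open_contains_ball_eq open_interior order_trans)
  define \<rho> where "\<rho> = min e' (r0 / 2)"
  have "rect g c \<subseteq> P" if c: "c \<in> ball p \<rho>" and near_side: "sx * (fst c - fst v) \<le> 0" for c
  proof
    fix q assume q: "q \<in> rect g c"
    have c_near: "\<bar>fst c - fst v\<bar> < \<rho>" "\<bar>snd c - snd p\<bar> < \<rho>"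
      using abs_fst_diff_le_dist[of c p] abs_snd_diff_le_dist[of c p] c p by (auto simp: dist_commute)
    have qx: "sx * (fst q - fst v) \<le> 0" "\<bar>fst q - fst v\<bar> < \<rho>"
      using q near_side c_near(1) sx by (auto simp: rect_def g_def min_def max_def split: if_splits)
    have "min (snd g) (snd c) \<le> snd q" "snd q \<le> max (snd g) (snd c)"
      using q by (simp_all add: rect_def)
    then consider "min (snd g) (snd p) \<le> snd q \<and> snd q \<le> max (snd g) (snd p)"
      | "\<bar>snd q - snd p\<bar> \<le> \<bar>snd c - snd p\<bar>"
      using between_or_abs_diff_le by blast
    then show "q \<in> P"
    proof cases
      case 1
      then show ?thesis
        using strip[rule_format, of q] qx by (simp add: \<rho>_def)
    next
      case 2
      then have "dist q p < r0"
        using dist_le_abs_fst_plus_abs_snd[of q p] qx(2) c_near(2) by (simp add: p \<rho>_def)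
      then show ?thesis
        using r0 by (auto simp: dist_commute)
    qed
  qed
  moreover have "\<rho> > 0"
    using \<open>e' > 0\<close> \<open>r0 > 0\<close> by (simp add: \<rho>_def)
  ultimately show ?thesis
    unfolding g_def by blast
qed

lemma guard_beyond_reflex_vertex_misses_far_side:
  fixes v :: pt
  assumes e: "e > 0" and sx: "sx \<in> {-1, 1}" and sy: "sy \<in> {-1, 1}"
    and M: "\<forall>q. dist q v < e \<longrightarrow> (q \<in> P \<longleftrightarrow> \<not> (sx * (fst q - fst v) > 0 \<and> sy * (snd q - snd v) > 0))"
    and p: "p = (fst v, snd v - sy * t)"
    and c: "c \<in> ball p (min t (e / 2))" and far_side: "sx * (fst c - fst v) > 0"
  shows "\<not> rect (fst v, snd v + sy * (e / 2)) c \<subseteq> P"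
proof
  let ?g = "(fst v, snd v + sy * (e / 2))"
  assume "rect ?g c \<subseteq> P"
  have c_near: "\<bar>fst c - fst v\<bar> < e / 2" "\<bar>snd c - snd p\<bar> < t"
    using abs_fst_diff_le_dist[of c p] abs_snd_diff_le_dist[of c p] c p by (auto simp: dist_commute)
  define q where "q = (fst v + (fst c - fst v) / 2, snd v + sy * (e / 4))"
  have "sy * (snd c - snd v) < 0"
    using c_near(2) sy by (auto simp: p)
  then have "min (snd ?g) (snd c) \<le> snd q \<and> snd q \<le> max (snd ?g) (snd c)"
    using sy e by (auto simp: q_def min_def max_def)
  moreover have "min (fst ?g) (fst c) \<le> fst q \<and> fst q \<le> max (fst ?g) (fst c)"
    by (simp add: q_def min_def max_def field_simps)
  ultimately have "q \<in> P"
    using \<open>rect ?g c \<subseteq> P\<close> by (auto simp: rect_def)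
  moreover have "dist q v < e"
    using dist_le_abs_fst_plus_abs_snd[of q v] c_near(1) sy e by (auto simp: q_def)
  moreover have "sx * (fst q - fst v) > 0" "sy * (snd q - snd v) > 0"
    using far_side sy e by (auto simp: q_def)
  ultimately show False
    using M by blast
qed

lemma rect_visibility_splits_below_reflex_vertex:
  fixes v :: pt
  assumes e: "e > 0" and sx: "sx \<in> {-1, 1}" and sy: "sy \<in> {-1, 1}"
    and M: "\<forall>q. dist q v < e \<longrightarrow> (q \<in> P \<longleftrightarrow> \<not> (sx * (fst q - fst v) > 0 \<and> sy * (snd q - snd v) > 0))"
    and t: "t > 0" and p: "p = (fst v, snd v - sy * t)"
    and chord: "\<And>\<sigma>. 0 < \<sigma> \<Longrightarrow> \<sigma> < t \<Longrightarrow> (fst v, snd v - sy * \<sigma>) \<in> interior P"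
    and p_interior: "p \<in> interior P"
  shows "rect_visibility_splits P p"
proof -
  let ?g = "(fst v, snd v + sy * (e / 2))"
  obtain \<rho> where "\<rho> > 0" and near: "\<forall>c\<in>ball p \<rho>. sx * (fst c - fst v) \<le> 0 \<longrightarrow> rect ?g c \<subseteq> P"
    using guard_beyond_reflex_vertex_sees_near_side[OF e sx sy M t p chord p_interior] by blast
  define \<rho>' where "\<rho>' = min \<rho> (min t (e / 2))"
  have "rect ?g c \<subseteq> P \<longleftrightarrow> inner (c - p) (sx, 0) \<le> 0" if "c \<in> ball p \<rho>'" for c
  proof -
    have "inner (c - p) (sx, 0) = sx * (fst c - fst v)"
      by (simp add: p inner_prod_def)
    moreover have "c \<in> ball p \<rho>" "c \<in> ball p (min t (e / 2))"
      using that by (simp_all add: \<rho>'_def)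
    moreover have "\<not> rect ?g c \<subseteq> P" if "sx * (fst c - fst v) > 0"
      using guard_beyond_reflex_vertex_misses_far_side[OF e sx sy M p \<open>c \<in> ball p (min t (e / 2))\<close> that] .
    ultimately show ?thesis
      using near by fastforce
  qed
  moreover have "(sx, 0) \<noteq> (0 :: pt)" "\<rho>' > 0"
    using sx \<open>\<rho> > 0\<close> t e by (auto simp: zero_prod_def \<rho>'_def)
  ultimately show ?thesis
    unfolding rect_visibility_splits_def by blast
qed

lemma rect_visibility_splits_swap:
  assumes "rect_visibility_splits P p"
  shows "rect_visibility_splits (prod.swap ` P) (prod.swap p)"
proof -
  obtain g n \<rho> where "n \<noteq> 0" "\<rho> > 0"
    and split: "\<forall>c\<in>ball p \<rho>. rect g c \<subseteq> P \<longleftrightarrow> inner (c - p) n \<le> 0"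
    using assms unfolding rect_visibility_splits_def by blast
  have "rect (prod.swap g) c \<subseteq> prod.swap ` P \<longleftrightarrow> inner (c - prod.swap p) (prod.swap n) \<le> 0"
    if "c \<in> ball (prod.swap p) \<rho>" for c
  proof -
    have "prod.swap c \<in> ball p \<rho>"
      using that dist_swap[of p "prod.swap c"] by simp
    moreover have "rect (prod.swap g) c = prod.swap ` rect g (prod.swap c)"
      using rect_swap[of g "prod.swap c"] by simp
    moreover have "inner (c - prod.swap p) (prod.swap n) = inner (prod.swap c - p) n"
      by (simp add: inner_prod_def)
    ultimately show ?thesis
      using split by (simp add: inj_image_subset_iff)
  qed
  moreover have "prod.swap n \<noteq> 0"
    using \<open>n \<noteq> 0\<close> by (metis swap_simp swap_swap zero_prod_def)
  ultimately show ?thesis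
    unfolding rect_visibility_splits_def using \<open>\<rho> > 0\<close> by blast
qed

lemma rect_visibility_splits_beside_reflex_vertex:
  fixes v :: pt
  assumes e: "e > 0" and sx: "sx \<in> {-1, 1}" and sy: "sy \<in> {-1, 1}"
    and M: "\<forall>q. dist q v < e \<longrightarrow> (q \<in> P \<longleftrightarrow> \<not> (sx * (fst q - fst v) > 0 \<and> sy * (snd q - snd v) > 0))"
    and t: "t > 0" and p: "p = (fst v - sx * t, snd v)"
    and chord: "\<And>\<sigma>. 0 < \<sigma> \<Longrightarrow> \<sigma> < t \<Longrightarrow> (fst v - sx * \<sigma>, snd v) \<in> interior P"
    and p_interior: "p \<in> interior P"
  shows "rect_visibility_splits P p"
proof -
  have "rect_visibility_splits (prod.swap ` P) (prod.swap p)"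
  proof (rule rect_visibility_splits_below_reflex_vertex[OF e sy sx swap_quadrant_complement[OF M] t])
    show "prod.swap p = (fst (prod.swap v), snd (prod.swap v) - sx * t)"
      using p by simp
    show "(fst (prod.swap v), snd (prod.swap v) - sx * \<sigma>) \<in> interior (prod.swap ` P)"
      if "0 < \<sigma>" "\<sigma> < t" for \<sigma>
      using chord[OF that] by (simp add: interior_swap mem_swap_image_iff)
    show "prod.swap p \<in> interior (prod.swap ` P)"
      using p_interior by (simp add: interior_swap mem_swap_image_iff)
  qed
  then show ?thesis
    using rect_visibility_splits_swap[of "prod.swap ` P" "prod.swap p"] by simp
qed

lemma interior_avoids_missing_quadrant:
  fixes v :: pt
  assumes sx: "sx \<in> {-1, 1}" and sy: "sy \<in> {-1, 1}"
    and M: "\<forall>q. dist q v < e \<longrightarrow> (q \<in> P \<longleftrightarrow> \<not> (sx * (fst q - fst v) > 0 \<and> sy * (snd q - snd v) > 0))"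
    and w: "w \<in> interior P" "dist w v < e"
  shows "\<not> (0 \<le> sx * (fst w - fst v) \<and> 0 \<le> sy * (snd w - snd v))"
proof
  assume "0 \<le> sx * (fst w - fst v) \<and> 0 \<le> sy * (snd w - snd v)"
  then obtain q where "q \<in> interior P" "q \<in> ball v e" "q \<in> quadrant v sx sy"
    using open_meets_quadrant_ball[OF open_interior w sx sy] by blast
  then have "q \<in> P" "dist q v < e" "sx * (fst q - fst v) > 0" "sy * (snd q - snd v) > 0"
    using interior_subset by (auto simp: quadrant_def dist_commute)
  then show False
    using M by blast
qed

lemma ray_point_rect_visibility_splits:
  assumes v: "reflex_vertex P v" and d: "d \<in> axis_dirs" and p: "p \<in> ray P v d"
    and p_interior: "p \<in> interior P"
  shows "rect_visibility_splits P p"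
proof -
  obtain e sx sy where e: "e > 0" and sx: "sx \<in> {-1, 1}" and sy: "sy \<in> {-1, 1}"
    and M: "\<forall>q. dist q v < e \<longrightarrow> (q \<in> P \<longleftrightarrow> \<not> (sx * (fst q - fst v) > 0 \<and> sy * (snd q - snd v) > 0))"
    using v unfolding reflex_vertex_def by blast
  obtain t where p_eq: "p = v + t *\<^sub>R d" and "t \<ge> 0"
    and chord: "\<And>\<sigma>. 0 < \<sigma> \<Longrightarrow> \<sigma> < t \<Longrightarrow> v + \<sigma> *\<^sub>R d \<in> interior P"
    using p unfolding ray_def by blast
  have "t \<noteq> 0"
    using interior_avoids_missing_quadrant[OF sx sy M, of v] p_interior p_eq e by auto
  then have "t > 0"
    using \<open>t \<ge> 0\<close> by simp
  consider "d = (sx, 0) \<or> d = (0, sy)" | "d = (0, - sy)" | "d = (- sx, 0)"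
    using d sx sy by (auto simp: axis_dirs_def)
  then show ?thesis
  proof cases
    case 1
    \<comment> \<open>A ray along an edge of the missing quadrant lies in its closure, so it cannot enter the interior.\<close>
    define \<sigma> where "\<sigma> = min t e / 2"
    have \<sigma>: "0 < \<sigma>" "\<sigma> < t" "\<sigma> < e"
      using \<open>t > 0\<close> e by (auto simp: \<sigma>_def)
    have "dist (v + \<sigma> *\<^sub>R d) v = \<sigma>"
      using 1 sx sy \<sigma>(1) by (auto simp: dist_norm norm_Pair)
    then show ?thesis
      using interior_avoids_missing_quadrant[OF sx sy M chord[OF \<sigma>(1,2)]] 1 \<sigma> sx sy by auto
  next
    case 2
    show ?thesis
    proof (rule rect_visibility_splits_below_reflex_vertex[OF e sx sy M \<open>t > 0\<close> _ _ p_interior])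
      show "p = (fst v, snd v - sy * t)"
        using p_eq 2 by (simp add: prod_eq_iff)
      show "(fst v, snd v - sy * \<sigma>) \<in> interior P" if "0 < \<sigma>" "\<sigma> < t" for \<sigma>
      proof -
        have "v + \<sigma> *\<^sub>R d = (fst v, snd v - sy * \<sigma>)"
          using 2 by (simp add: prod_eq_iff)
        then show ?thesis
          using chord[OF that] by simp
      qed
    qed
  next
    case 3
    show ?thesis
    proof (rule rect_visibility_splits_beside_reflex_vertex[OF e sx sy M \<open>t > 0\<close> _ _ p_interior])
      show "p = (fst v - sx * t, snd v)"
        using p_eq 3 by (simp add: prod_eq_iff)
      show "(fst v - sx * \<sigma>, snd v) \<in> interior P" if "0 < \<sigma>" "\<sigma> < t" for \<sigma>
      proof -
        have "v + \<sigma> *\<^sub>R d = (fst v - sx * \<sigma>, snd v)"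
          using 3 by (simp add: prod_eq_iff)
        then show ?thesis
          using chord[OF that] by simp
      qed
    qed
  qed
qed

lemma pixel_interior_not_in_cuts:
  assumes op: "orthogonal_polygon P" and \<psi>: "\<psi> \<in> pixels P" and p: "p \<in> interior \<psi>"
  shows "p \<notin> cuts P"
proof
  assume "p \<in> cuts P"
  then obtain v d where "reflex_vertex P v" "d \<in> axis_dirs" "p \<in> ray P v d"
    unfolding cuts_def by blast
  moreover have "p \<in> interior P"
    using p interior_mono[OF pixel_subset_polygon[OF op \<psi>]] by blast
  ultimately show False
    using ray_point_rect_visibility_splits pixel_interior_not_splits[OF op \<psi> p] by blast
qed

lemma rect_subset_on_pixel:
  assumes op: "orthogonal_polygon P" and \<psi>: "\<psi> \<in> pixels P" and p: "p \<in> interior \<psi>"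
    and R: "rect g p \<subseteq> P" and p': "p' \<in> \<psi>"
  shows "rect g p' \<subseteq> P"
proof -
  obtain C where C: "connected C" "C \<subseteq> interior P - cuts P" "\<psi> = closure C"
    by (rule pixelE[OF \<psi>])
  have "p \<in> interior P"
    using p interior_mono[OF pixel_subset_polygon[OF op \<psi>]] by blast
  then obtain \<epsilon> where "\<epsilon> > 0" and near: "\<forall>y. dist y p < \<epsilon> \<longrightarrow> rect g y \<subseteq> P"
    using rect_subset_near[OF op _ pixel_interior_not_in_cuts[OF op \<psi> p] R] by blast
  moreover have "p \<in> closure C"
    using p C(3) interior_subset by blast
  ultimately obtain c where "c \<in> C" "dist c p < \<epsilon>"
    using closure_approachable by blast
  then have "C \<inter> {y. rect g y \<subseteq> P} \<noteq> {}"
    using near by blast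
  then have "closure C \<subseteq> {y. rect g y \<subseteq> P}"
    using connected_rect_subset_or_disjoint[OF op C(1,2), of g]
      closure_minimal[OF _ closed_rect_subset[OF orthogonal_polygon_closed[OF op]]] by blast
  then show ?thesis
    using p' C(3) by blast
qed


section \<open>Non-degeneracy\<close>

lemma rect_widening_vertical:
  fixes g c p' :: pt
  assumes "fst p' = fst g" "fst c \<noteq> fst g" "snd c \<noteq> snd g"
  obtains R where "pos_area_rect R" "rect g p' \<subset> R" "R \<subseteq> rect g c \<union> rect c p'"
proof -
  define y0 y1 where "y0 = min (min (snd g) (snd c)) (snd p')" and "y1 = max (max (snd g) (snd c)) (snd p')"
  define R where "R = {q. min (fst g) (fst c) \<le> fst q \<and> fst q \<le> max (fst g) (fst c) \<and> y0 \<le> snd q \<and> snd q \<le> y1}"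
  have "min (fst g) (fst c) < max (fst g) (fst c)" "y0 < y1"
    using assms(2,3) by (auto simp: y0_def y1_def min_def max_def)
  then have "pos_area_rect R"
    unfolding pos_area_rect_def R_def by blast
  moreover have "rect g p' \<subseteq> R"
    using assms(1) by (auto simp: rect_def R_def y0_def y1_def)
  moreover have "(fst c, snd g) \<in> R - rect g p'"
    using assms by (auto simp: rect_def R_def y0_def y1_def)
  moreover have "R \<subseteq> rect g c \<union> rect c p'"
  proof
    fix q assume "q \<in> R"
    then have "min (snd g) (snd c) \<le> snd q \<and> snd q \<le> max (snd g) (snd c) \<or>
        min (snd c) (snd p') \<le> snd q \<and> snd q \<le> max (snd c) (snd p')"
      by (auto simp: R_def y0_def y1_def min_def max_def split: if_splits)
    then show "q \<in> rect g c \<union> rect c p'"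
      using \<open>q \<in> R\<close> assms(1) by (auto simp: R_def rect_def min.commute max.commute)
  qed
  ultimately show thesis
    using that by blast
qed

lemma rect_widening:
  fixes g c p' :: pt
  assumes "fst p' = fst g \<or> snd p' = snd g" "fst c \<noteq> fst g" "snd c \<noteq> snd g"
  obtains R where "pos_area_rect R" "rect g p' \<subset> R" "R \<subseteq> rect g c \<union> rect c p'"
proof (cases "fst p' = fst g")
  case True
  then show thesis
    using rect_widening_vertical assms(2,3) that by blast
next
  case False
  then obtain R where R: "pos_area_rect R" "rect (prod.swap g) (prod.swap p') \<subset> R"
    "R \<subseteq> rect (prod.swap g) (prod.swap c) \<union> rect (prod.swap c) (prod.swap p')"
    using rect_widening_vertical[of "prod.swap p'" "prod.swap g" "prod.swap c"] assms by auto
  have unswap: "rect a b = prod.swap ` rect (prod.swap a) (prod.swap b)" for a b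
    by (simp add: rect_swap)
  show thesis
  proof (rule that)
    show "pos_area_rect (prod.swap ` R)"
      using pos_area_rect_swap[OF R(1)] .
    show "rect g p' \<subset> prod.swap ` R"
      using R(2) unfolding unswap[of g p'] by (simp add: inj_image_subset_iff psubset_eq inj_image_eq_iff)
    show "prod.swap ` R \<subseteq> rect g c \<union> rect c p'"
      using R(3) unfolding unswap[of g c] unswap[of c p'] by (auto simp: mem_swap_image_iff)
  qed
qed

lemma pixel_rect_not_degenerate:
  assumes op: "orthogonal_polygon P" and \<psi>: "\<psi> \<in> pixels P" and p: "p \<in> interior \<psi>"
    and R: "rect g p \<subseteq> P" and p': "p' \<in> \<psi>"
  shows "\<not> degenerate P (rect g p')"
proof
  assume deg: "degenerate P (rect g p')"
  have "fst p' = fst g \<or> snd p' = snd g"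
  proof (rule ccontr)
    assume "\<not> ?thesis"
    then have "min (fst g) (fst p') < max (fst g) (fst p')" "min (snd g) (snd p') < max (snd g) (snd p')"
      by (auto simp: min_def max_def)
    then have "pos_area_rect (rect g p')"
      unfolding pos_area_rect_def rect_def by blast
    then show False
      using deg by (simp add: degenerate_def)
  qed
  obtain r where "r > 0" "ball p r \<subseteq> interior \<psi>"
    using p by (meson open_contains_ball_eq open_interior)
  define c where "c = (if fst p = fst g then fst p + r / 3 else fst p, if snd p = snd g then snd p + r / 3 else snd p)"
  have c: "fst c \<noteq> fst g" "snd c \<noteq> snd g"
    using \<open>r > 0\<close> by (auto simp: c_def)
  have "dist c p \<le> r / 3 + r / 3"
    using dist_le_abs_fst_plus_abs_snd[of c p] \<open>r > 0\<close> by (auto simp: c_def)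
  then have "dist p c < r"
    using \<open>r > 0\<close> by (simp add: dist_commute)
  then have c_interior: "c \<in> interior \<psi>"
    using \<open>ball p r \<subseteq> interior \<psi>\<close> by auto
  then have "c \<in> \<psi>"
    using interior_subset by blast
  then have "rect g c \<subseteq> P"
    using rect_subset_on_pixel[OF op \<psi> p R] by blast
  moreover have "rect c c \<subseteq> P"
    using \<open>c \<in> \<psi>\<close> pixel_subset_polygon[OF op \<psi>] by (auto simp: rect_def prod_eq_iff)
  then have "rect c p' \<subseteq> P"
    using rect_subset_on_pixel[OF op \<psi> c_interior _ p'] by blast
  moreover obtain R' where "pos_area_rect R'" "rect g p' \<subset> R'" "R' \<subseteq> rect g c \<union> rect c p'"
    using rect_widening[OF \<open>fst p' = fst g \<or> snd p' = snd g\<close> c] by blast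
  ultimately show False
    using deg unfolding degenerate_def by blast
qed

theorem lemmaA1:
  fixes P \<psi> :: "(real \<times> real) set" and p p' :: "real \<times> real" and ndeg :: bool
  assumes "orthogonal_polygon P"
    and "\<psi> \<in> pixels P"
    and "p \<in> interior \<psi>"
    and "p' \<in> \<psi>"
  shows "guarding_set ndeg P p \<subseteq> guarding_set ndeg P p'"
proof
  fix g assume "g \<in> guarding_set ndeg P p"
  then have "g \<in> P" "rect g p \<subseteq> P"
    by (auto simp: guarding_set_def rguards_def)
  then show "g \<in> guarding_set ndeg P p'"
    using rect_subset_on_pixel[OF assms(1-3) _ assms(4)] pixel_rect_not_degenerate[OF assms(1-3) _ assms(4)]
    by (simp add: guarding_set_def rguards_def)
qed

end
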